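(* Let $q\in K$ with $|q-1|<\omega$. Let $\{\lambda_n\}_{n\in\mathbb{J}}$ be a family with $\lambda_n\in\mathbf{W}(\mathcal{O}_K)$ and phantom vectors $(\phi_{n,0},\phi_{n,1},\dots)$. Then the formal power series $$a^+(T):=\exp\Big(\sum_{n\in\mathbb{J}}\sum_{m\ge0}\phi_{n,m}\,(q^{np^m}-1)\,\frac{T^{np^m}}{p^m}\Big)\in K[[T]]$$ belongs to $\mathcal{E}_K$.
   Context: $K$ is a field of characteristic $0$, complete for a discrete non-archimedean absolute value, residue field of characteristic $p>0$; $\mathcal{O}_K$ its ring of integers; $\omega=|p|^{1/(p-1)}$. $\mathcal{E}_K$ is the ring of Laurent series $\sum a_iT^i$ over $K$ with $\sup|a_i|<\infty$ and $|a_i|\to0$ as $i\to-\infty$. $\mathbb{J}=\{n\ge1:p\nmid n\}$. $\mathbf{W}(\mathcal{O}_K)$ is the ring of $p$-typical Witt vectors over $\mathcal{O}_K$; the phantom vector of $\lambda=(\lambda_0,\lambda_1,\ldots)$ is $\phi_m=\sum_{i=0}^mp^i\lambda_i^{p^{m-i}}$. *)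

theory Defs
  imports Complex_Main "HOL-Computational_Algebra.Formal_Power_Series"
          "HOL-Computational_Algebra.Primes"
begin

text \<open>A field K (of characteristic 0, via the type class) with an absolute value
  absv which is non-archimedean, discrete, complete, and whose residue field has
  characteristic p (equivalently, since p is prime and char K = 0: |p| < 1).\<close>

definition nonarch_abs :: "('a::field \<Rightarrow> real) \<Rightarrow> bool" where
  "nonarch_abs absv \<longleftrightarrow>
     (\<forall>x. absv x \<ge> 0) \<and> (\<forall>x. absv x = 0 \<longleftrightarrow> x = 0) \<and>
     (\<forall>x y. absv (x * y) = absv x * absv y) \<and>
     (\<forall>x y. absv (x + y) \<le> max (absv x) (absv y))"

definition discrete_abs :: "('a::field \<Rightarrow> real) \<Rightarrow> bool" where
  "discrete_abs absv \<longleftrightarrow>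
     (\<exists>\<pi>. absv \<pi> < 1 \<and> (\<forall>x. x \<noteq> 0 \<longrightarrow> (\<exists>k::int. absv x = absv \<pi> powi k)))"

definition complete_abs :: "('a::field \<Rightarrow> real) \<Rightarrow> bool" where
  "complete_abs absv \<longleftrightarrow>
     (\<forall>X::nat \<Rightarrow> 'a.
        (\<forall>e>0. \<exists>N. \<forall>m\<ge>N. \<forall>n\<ge>N. absv (X m - X n) < e) \<longrightarrow>
        (\<exists>L. \<forall>e>0. \<exists>N. \<forall>n\<ge>N. absv (X n - L) < e))"

definition padic_setting :: "('a::field_char_0 \<Rightarrow> real) \<Rightarrow> nat \<Rightarrow> bool" where
  "padic_setting absv p \<longleftrightarrow> nonarch_abs absv \<and> discrete_abs absv \<and> complete_abs absv
     \<and> prime p \<and> absv (of_nat p) < 1"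

definition omega :: "('a::field_char_0 \<Rightarrow> real) \<Rightarrow> nat \<Rightarrow> real" where
  "omega absv p = absv (of_nat p) powr (1 / (real p - 1))"

definition J_set :: "nat \<Rightarrow> nat set" where
  "J_set p = {n. n \<ge> 1 \<and> \<not> p dvd n}"

text \<open>A p-typical Witt vector over O_K is a sequence of elements of O_K.\<close>
definition witt_OK :: "('a::field_char_0 \<Rightarrow> real) \<Rightarrow> (nat \<Rightarrow> 'a) \<Rightarrow> bool" where
  "witt_OK absv lam \<longleftrightarrow> (\<forall>i. absv (lam i) \<le> 1)"

definition phantom :: "nat \<Rightarrow> (nat \<Rightarrow> 'a::field_char_0) \<Rightarrow> nat \<Rightarrow> 'a" where
  "phantom p lam m = (\<Sum>i\<le>m. of_nat p ^ i * lam i ^ (p ^ (m - i)))"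

text \<open>The formal power series
  sum over n in J, m \<ge> 0 of phi_{n,m} (q^{n p^m} - 1) T^{n p^m} / p^m.
  Each exponent N \<ge> 1 is n p^m for a unique n in J, m \<ge> 0 (m = multiplicity of p
  in N), so its coefficients are given directly.\<close>
definition inner_series :: "nat \<Rightarrow> 'a::field_char_0 \<Rightarrow> (nat \<Rightarrow> nat \<Rightarrow> 'a) \<Rightarrow> 'a fps" where
  "inner_series p q lam = Abs_fps (\<lambda>N.
     if N = 0 then 0 else
       (let m = multiplicity p N; n = N div p ^ m in
          phantom p (lam n) m * (q ^ N - 1) / of_nat p ^ m))"

text \<open>exp of a power series with zero constant term: composition with exp(X).\<close>
definition fps_exp_of :: "'a::field_char_0 fps \<Rightarrow> 'a fps" where
  "fps_exp_of f = fps_compose (fps_exp 1) f"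

definition E_ring :: "('a::field_char_0 \<Rightarrow> real) \<Rightarrow> (int \<Rightarrow> 'a) set" where
  "E_ring absv = {a. bdd_above (range (\<lambda>i. absv (a i))) \<and>
                     (\<lambda>k::nat. absv (a (- int k))) \<longlonglongrightarrow> 0}"

definition fps_to_laurent :: "'a::zero fps \<Rightarrow> (int \<Rightarrow> 'a)" where
  "fps_to_laurent f = (\<lambda>i. if i \<ge> 0 then fps_nth f (nat i) else 0)"

end

theory Submission
  imports Defs
begin

unbundle fps_syntax

text \<open>
  Call \<open>G\<close> the series inside the exponential. Its coefficients have absolute value at most
  \<open>|q - 1|\<close>: the phantom components are integral, and since \<open>|x^p - 1| \<le> |p| |x - 1|\<close> whenever
  \<open>|x - 1| \<le> \<omega>\<close>, the factor \<open>|q^(n p^m) - 1| \<le> |p|^m |q - 1|\<close> cancels the denominator \<open>p^m\<close>.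
  Legendre's formula gives \<open>|j!| \<ge> \<omega>^j\<close>, so the coefficients of \<open>G^j / j!\<close> are bounded by
  \<open>(|q - 1| / \<omega>)^j \<le> 1\<close>. By the ultrametric inequality every coefficient of \<open>exp G\<close> has
  absolute value at most 1, and a bounded power series lies in \<open>E_K\<close>.
\<close>

locale nonarch_valued =
  fixes absv :: "'a::field \<Rightarrow> real"
  assumes nonarch: "nonarch_abs absv"
begin

lemma absv_nonneg: "absv x \<ge> 0"
  using nonarch unfolding nonarch_abs_def by blast

lemma absv_eq_0_iff: "absv x = 0 \<longleftrightarrow> x = 0"
  using nonarch unfolding nonarch_abs_def by blast

lemma absv_mult: "absv (x * y) = absv x * absv y"
  using nonarch unfolding nonarch_abs_def by blast

lemma absv_add_le_max: "absv (x + y) \<le> max (absv x) (absv y)"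
  using nonarch unfolding nonarch_abs_def by blast

lemma absv_0 [simp]: "absv 0 = 0"
  using absv_eq_0_iff by simp

lemma absv_1 [simp]: "absv 1 = 1"
  using absv_mult[of 1 1] absv_eq_0_iff[of 1] by simp

lemma absv_minus: "absv (- x) = absv x"
proof -
  have "absv (-1) * absv (-1) = 1"
    using absv_mult[of "-1" "-1"] by simp
  then have "absv (-1) = 1"
    using absv_nonneg[of "-1"] by (metis abs_of_nonneg abs_square_eq_1 power2_eq_square)
  then show ?thesis
    using absv_mult[of "-1" x] by simp
qed

lemma absv_diff_le_max: "absv (x - y) \<le> max (absv x) (absv y)"
  using absv_add_le_max[of x "- y"] absv_minus[of y] by simp

lemma absv_power: "absv (x ^ n) = absv x ^ n"
  by (induction n) (simp_all add: absv_mult)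

lemma absv_divide: "absv (x / y) = absv x / absv y"
proof (cases "y = 0")
  case False
  then have "absv y * absv (inverse y) = 1"
    using absv_mult[of y "inverse y"] by simp
  then have "absv (inverse y) = inverse (absv y)"
    by (rule inverse_unique[symmetric])
  then show ?thesis
    by (simp add: divide_inverse absv_mult)
qed simp

lemma absv_sum_le:
  assumes "finite A" "c \<ge> 0" "\<And>i. i \<in> A \<Longrightarrow> absv (f i) \<le> c"
  shows "absv (sum f A) \<le> c"
  using assms
proof (induction A rule: finite_induct)
  case (insert x F)
  have "absv (sum f (insert x F)) \<le> max (absv (f x)) (absv (sum f F))"
    using insert.hyps absv_add_le_max by simp
  also have "\<dots> \<le> c"
    using insert by simp
  finally show ?case .
qed simp

lemma absv_of_nat_le_1: "absv (of_nat n) \<le> 1"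
proof (induction n)
  case (Suc n)
  have "absv (1 + of_nat n) \<le> max (absv 1) (absv (of_nat n))"
    by (rule absv_add_le_max)
  with Suc show ?case by simp
qed simp

lemma absv_mult_of_nat_le: "absv (of_nat n * x) \<le> absv x"
  unfolding absv_mult by (rule mult_left_le_one_le[OF absv_nonneg absv_nonneg absv_of_nat_le_1])

lemma absv_le_1_of_absv_diff_1_le_1:
  assumes "absv (x - 1) \<le> 1"
  shows "absv x \<le> 1"
  using absv_add_le_max[of "x - 1" 1] assms by simp

lemma absv_power_minus_1_le:
  assumes "absv x \<le> 1"
  shows "absv (x ^ n - 1) \<le> absv (x - 1)"
proof (induction n)
  case (Suc n)
  have "absv (x * (x ^ n - 1)) \<le> absv (x ^ n - 1)"
    unfolding absv_mult by (rule mult_left_le_one_le[OF absv_nonneg absv_nonneg assms])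
  moreover have "x ^ Suc n - 1 = x * (x ^ n - 1) + (x - 1)"
    by (simp add: algebra_simps)
  then have "absv (x ^ Suc n - 1) \<le> max (absv (x * (x ^ n - 1))) (absv (x - 1))"
    by (metis absv_add_le_max)
  ultimately show ?case
    using Suc.IH by linarith
qed (simp add: absv_nonneg)

lemma absv_fps_power_nth_le:
  assumes "\<And>k. absv (G $ k) \<le> r" "r \<ge> 0"
  shows "absv ((G ^ j) $ k) \<le> r ^ j"
proof (induction j arbitrary: k)
  case (Suc j)
  have "absv ((G ^ Suc j) $ k) = absv (\<Sum>i=0..k. G $ i * (G ^ j) $ (k - i))"
    by (simp add: fps_mult_nth)
  also have "\<dots> \<le> r ^ Suc j"
    by (rule absv_sum_le)
      (use assms Suc.IH absv_nonneg in \<open>auto simp: absv_mult intro!: mult_mono\<close>)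
  finally show ?case .
qed simp

end

lemma fps_to_laurent_in_E_ring:
  fixes absv :: "'a::field_char_0 \<Rightarrow> real"
  assumes "nonarch_valued absv" "\<And>k. absv (f $ k) \<le> C"
  shows "fps_to_laurent f \<in> E_ring absv"
proof -
  interpret nonarch_valued absv
    by (fact assms(1))
  have "bdd_above (range (\<lambda>i. absv (fps_to_laurent f i)))"
    by (rule bdd_aboveI2[where M = "max C 0"]) (auto simp: fps_to_laurent_def assms(2) le_max_iff_disj)
  moreover have "\<forall>\<^sub>F k in sequentially. absv (fps_to_laurent f (- int k)) = 0"
    unfolding eventually_sequentially by (rule exI[of _ 1]) (simp add: fps_to_laurent_def)
  then have "(\<lambda>k. absv (fps_to_laurent f (- int k))) \<longlonglongrightarrow> 0"
    by (rule tendsto_eventually)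
  ultimately show ?thesis
    by (simp add: E_ring_def)
qed


locale residue_char_p = nonarch_valued absv
  for absv :: "'a::field_char_0 \<Rightarrow> real" +
  fixes p :: nat
  assumes prime_p: "prime p"
    and absv_p_less_1: "absv (of_nat p) < 1"
begin

lemma p_ge_2: "p \<ge> 2"
  using prime_p prime_ge_2_nat by blast

lemma absv_p_pos: "absv (of_nat p) > 0"
  using p_ge_2 absv_eq_0_iff[of "of_nat p"] absv_nonneg[of "of_nat p"] by simp

lemma absv_of_nat_not_dvd:
  assumes "\<not> p dvd i"
  shows "absv (of_nat i) = 1"
proof -
  have i0: "i \<noteq> 0"
    using assms by (metis dvd_0_right)
  have "coprime i p"
    using assms prime_p by (metis coprime_commute prime_imp_coprime)
  then obtain x y where "i * x = p * y + 1"
    using bezout_nat[OF i0, of p] by auto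
  then have "(of_nat x * of_nat i :: 'a) = of_nat y * of_nat p + 1"
    by (metis mult.commute of_nat_1 of_nat_add of_nat_mult)
  then have "1 \<le> max (absv (of_nat x * of_nat i :: 'a)) (absv (of_nat y * of_nat p :: 'a))"
    using absv_diff_le_max[of "of_nat x * of_nat i :: 'a" "of_nat y * of_nat p"] by simp
  moreover have "absv (of_nat y * of_nat p :: 'a) < 1"
    using absv_mult_of_nat_le[of y "of_nat p"] absv_p_less_1 by linarith
  ultimately have "1 \<le> absv (of_nat i :: 'a)"
    using absv_mult_of_nat_le[of x "of_nat i"] by linarith
  then show ?thesis
    using absv_of_nat_le_1[of i] by simp
qed

lemma absv_fact: "absv (fact j :: 'a) = absv (of_nat p) ^ (j div p) * absv (fact (j div p) :: 'a)"
proof (induction j)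
  case (Suc j)
  have step: "absv (fact (Suc j) :: 'a) = absv (of_nat (Suc j) :: 'a) * absv (fact j :: 'a)"
    by (simp only: fact_Suc absv_mult)
  show ?case
  proof (cases "p dvd Suc j")
    case True
    then obtain b where b: "Suc j = p * Suc b"
      by (metis dvd_def mult_0_right nat.distinct(1) not0_implies_Suc)
    then have "Suc j div p = Suc b" "j div p = b"
      using p_ge_2 by (auto intro: div_nat_eqI)
    moreover have "absv (of_nat (Suc j) :: 'a) = absv (of_nat p) * absv (of_nat (Suc b) :: 'a)"
      by (simp only: b of_nat_mult absv_mult)
    ultimately show ?thesis
      using step Suc.IH by (simp add: absv_mult mult_ac)
  next
    case False
    then have "Suc j div p = j div p"
      by (simp add: div_Suc dvd_eq_mod_eq_0)
    then show ?thesis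
      using step Suc.IH by (simp only: absv_of_nat_not_dvd[OF False] mult_1)
  qed
qed simp

lemma omega_pos: "omega absv p > 0"
  using absv_p_pos by (simp add: omega_def)

lemma omega_le_1: "omega absv p \<le> 1"
  using absv_p_pos absv_p_less_1 p_ge_2 unfolding omega_def by (intro powr_le1) auto

lemma omega_power: "omega absv p ^ (p - 1) = absv (of_nat p)"
proof -
  have "omega absv p ^ (p - 1) = absv (of_nat p) powr (real (p - 1) * (1 / (real p - 1)))"
    using absv_p_pos by (simp add: omega_def powr_power)
  also have "real (p - 1) * (1 / (real p - 1)) = 1"
    using p_ge_2 by (simp add: of_nat_diff)
  finally show ?thesis
    using absv_p_pos by simp
qed

lemma absv_fact_ge: "absv (fact j :: 'a) \<ge> omega absv p ^ j"
proof (induction j rule: less_induct)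
  case (less j)
  show ?case
  proof (cases "j = 0")
    case False
    define a where "a = j div p"
    have "a < j"
      using False p_ge_2 by (simp add: a_def)
    have "(p - 1) * a + a = p * a"
      using p_ge_2 by (cases p) simp_all
    moreover have "p * a \<le> j"
      by (simp add: a_def)
    ultimately have "(p - 1) * a + a \<le> j"
      by simp
    then have "omega absv p ^ j \<le> omega absv p ^ ((p - 1) * a + a)"
      using omega_pos omega_le_1 by (intro power_decreasing) auto
    also have "\<dots> = absv (of_nat p) ^ a * omega absv p ^ a"
      by (simp only: power_add power_mult omega_power)
    also have "\<dots> \<le> absv (of_nat p) ^ a * absv (fact a :: 'a)"
      by (rule mult_left_mono[OF less.IH[OF \<open>a < j\<close>] zero_le_power[OF absv_nonneg]])
    also have "\<dots> = absv (fact j :: 'a)"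
      unfolding a_def by (rule absv_fact[symmetric])
    finally show ?thesis .
  qed simp
qed

text \<open>Binomial expansion of \<open>(1 + t)\<^sup>p\<close>: the middle coefficients are divisible by \<open>p\<close>, and
  the top term is controlled by \<open>|t|\<^sup>p\<^sup>-\<^sup>1 \<le> \<omega>\<^sup>p\<^sup>-\<^sup>1 = |p|\<close>.\<close>
lemma absv_power_p_minus_1_le:
  assumes "absv (x - 1) \<le> omega absv p"
  shows "absv (x ^ p - 1) \<le> absv (of_nat p) * absv (x - 1)"
proof -
  define t where "t = x - 1"
  obtain k where pk: "p = Suc k"
    using p_ge_2 by (cases p) auto
  have t1: "absv t \<le> 1"
    using assms omega_le_1 by (simp add: t_def)
  have "x ^ p = (t + 1) ^ p"
    by (simp add: t_def)
  also have "\<dots> = (\<Sum>i\<le>p. of_nat (p choose i) * t ^ i * 1 ^ (p - i))"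
    by (rule binomial_ring)
  also have "\<dots> = 1 + (\<Sum>i\<le>k. of_nat (p choose Suc i) * t ^ Suc i)"
    unfolding pk by (subst sum.atMost_Suc_shift) simp
  finally have xp: "x ^ p - 1 = (\<Sum>i\<le>k. of_nat (p choose Suc i) * t ^ Suc i)"
    by simp
  show ?thesis
    unfolding xp t_def[symmetric]
  proof (rule absv_sum_le)
    fix i assume "i \<in> {..k}"
    show "absv (of_nat (p choose Suc i) * t ^ Suc i) \<le> absv (of_nat p) * absv t"
    proof (cases "Suc i = p")
      case True
      have "absv t ^ (p - 1) \<le> absv (of_nat p)"
        unfolding omega_power[symmetric]
        by (rule power_mono) (use assms absv_nonneg in \<open>simp_all add: t_def\<close>)
      then have "absv t ^ (p - 1) * absv t \<le> absv (of_nat p) * absv t"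
        by (rule mult_right_mono[OF _ absv_nonneg])
      with True show ?thesis
        by (simp add: absv_mult absv_power pk mult.commute)
    next
      case False
      with \<open>i \<in> {..k}\<close> pk have "Suc i < p"
        by auto
      then have "p dvd (p choose Suc i)"
        by (rule dvd_choose_prime) (use prime_p in auto)
      then obtain c where "p choose Suc i = p * c"
        by (rule dvdE)
      then have "absv (of_nat (p choose Suc i) :: 'a) \<le> absv (of_nat p)"
        using absv_mult_of_nat_le[of c "of_nat p"] by (simp add: mult.commute)
      moreover have "absv (t ^ Suc i) \<le> absv t"
        unfolding absv_power using t1 absv_nonneg[of t] by (simp add: mult_left_le power_le_one)
      ultimately show ?thesis
        unfolding absv_mult by (rule mult_mono) (use absv_nonneg in auto)
    qed
  qed (auto intro!: mult_nonneg_nonneg absv_nonneg)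
qed

lemma absv_power_p_power_minus_1_le:
  assumes "absv (x - 1) \<le> omega absv p"
  shows "absv (x ^ (p ^ m) - 1) \<le> absv (of_nat p) ^ m * absv (x - 1)"
proof (induction m)
  case (Suc m)
  have "absv (of_nat p) ^ m * absv (x - 1) \<le> absv (x - 1)"
    using absv_p_less_1 absv_nonneg
    by (intro mult_left_le_one_le) (auto intro: power_le_one)
  then have "absv (x ^ (p ^ m) - 1) \<le> omega absv p"
    using Suc.IH assms by linarith
  then have "absv ((x ^ (p ^ m)) ^ p - 1) \<le> absv (of_nat p) * absv (x ^ (p ^ m) - 1)"
    by (rule absv_power_p_minus_1_le)
  also have "\<dots> \<le> absv (of_nat p) * (absv (of_nat p) ^ m * absv (x - 1))"
    by (rule mult_left_mono[OF Suc.IH absv_nonneg])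
  finally show ?case
    by (simp add: power_mult[symmetric] mult_ac)
qed simp

lemma absv_power_mult_p_power_minus_1_le:
  assumes "absv (x - 1) \<le> omega absv p"
  shows "absv (x ^ (n * p ^ m) - 1) \<le> absv (of_nat p) ^ m * absv (x - 1)"
proof -
  have "absv x \<le> 1"
    by (rule absv_le_1_of_absv_diff_1_le_1) (use assms omega_le_1 in linarith)
  then have xn: "absv (x ^ n - 1) \<le> absv (x - 1)"
    by (rule absv_power_minus_1_le)
  then have "absv (x ^ n - 1) \<le> omega absv p"
    using assms by linarith
  then have "absv ((x ^ n) ^ (p ^ m) - 1) \<le> absv (of_nat p) ^ m * absv (x ^ n - 1)"
    by (rule absv_power_p_power_minus_1_le)
  also have "\<dots> \<le> absv (of_nat p) ^ m * absv (x - 1)"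
    by (rule mult_left_mono[OF xn zero_le_power[OF absv_nonneg]])
  finally show ?thesis
    by (simp add: power_mult)
qed

lemma absv_phantom_le_1:
  assumes "witt_OK absv lam"
  shows "absv (phantom p lam m) \<le> 1"
  unfolding phantom_def
proof (rule absv_sum_le)
  fix i
  have "absv (lam i) \<le> 1"
    using assms by (simp add: witt_OK_def)
  then show "absv (of_nat p ^ i * lam i ^ p ^ (m - i)) \<le> 1"
    using absv_of_nat_le_1 absv_nonneg
    by (auto simp: absv_mult absv_power intro!: mult_le_one power_le_one)
qed auto

lemma absv_inner_series_nth_le:
  assumes q: "absv (q - 1) \<le> omega absv p"
    and lam: "\<forall>n\<in>J_set p. witt_OK absv (lam n)"
  shows "absv (inner_series p q lam $ N) \<le> absv (q - 1)"
proof (cases "N = 0")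
  case False
  define m where "m = multiplicity p N"
  define n where "n = N div p ^ m"
  have N_eq: "N = n * p ^ m"
    unfolding n_def m_def by (simp add: multiplicity_dvd)
  have "\<not> p dvd n"
    unfolding n_def m_def by (rule multiplicity_decompose) (use False p_ge_2 in auto)
  moreover have "n \<noteq> 0"
    using N_eq False by auto
  ultimately have "n \<in> J_set p"
    by (simp add: J_set_def)
  have qN: "absv (q ^ N - 1) \<le> absv (of_nat p) ^ m * absv (q - 1)"
    unfolding N_eq using q by (rule absv_power_mult_p_power_minus_1_le)
  have "absv (inner_series p q lam $ N)
      = absv (phantom p (lam n) m) * absv (q ^ N - 1) / absv (of_nat p) ^ m"
    using False by (simp add: inner_series_def m_def n_def Let_def absv_divide absv_mult absv_power)
  also have "\<dots> \<le> 1 * (absv (of_nat p) ^ m * absv (q - 1)) / absv (of_nat p) ^ m"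
    using absv_phantom_le_1 lam \<open>n \<in> J_set p\<close> qN absv_nonneg
    by (intro divide_right_mono mult_mono) auto
  also have "\<dots> = absv (q - 1)"
    using absv_p_pos by simp
  finally show ?thesis .
qed (simp add: inner_series_def absv_nonneg)

lemma absv_fps_exp_of_nth_le_1:
  assumes G: "\<And>k. absv (G $ k) \<le> r" and r: "0 \<le> r" "r \<le> omega absv p"
  shows "absv (fps_exp_of G $ k) \<le> 1"
  unfolding fps_exp_of_def fps_compose_nth
proof (rule absv_sum_le)
  fix i
  have pos: "omega absv p ^ i > 0"
    using omega_pos by simp
  have "absv (fps_exp 1 $ i * (G ^ i) $ k) = absv ((G ^ i) $ k) / absv (fact i :: 'a)"
    by (simp add: absv_mult absv_divide)
  also have "\<dots> \<le> r ^ i / omega absv p ^ i"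
    using absv_fps_power_nth_le[OF G r(1)] absv_fact_ge pos r(1)
    by (intro frac_le) auto
  also have "\<dots> \<le> 1"
    using pos power_mono[OF r(2) r(1), of i] by simp
  finally show "absv (fps_exp 1 $ i * (G ^ i) $ k) \<le> 1" .
qed auto

end

theorem lemma5p4p4:
  fixes absv :: "'a::field_char_0 \<Rightarrow> real" and p :: nat and q :: 'a
    and lam :: "nat \<Rightarrow> nat \<Rightarrow> 'a"
  assumes "padic_setting absv p"
    and "absv (q - 1) < omega absv p"
    and "\<forall>n\<in>J_set p. witt_OK absv (lam n)"
  shows "fps_to_laurent (fps_exp_of (inner_series p q lam)) \<in> E_ring absv"
proof -
  interpret residue_char_p absv p
    using assms(1) by unfold_locales (auto simp: padic_setting_def)
  have q: "absv (q - 1) \<le> omega absv p"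
    using assms(2) by simp
  have "\<And>N. absv (inner_series p q lam $ N) \<le> absv (q - 1)"
    by (rule absv_inner_series_nth_le[OF q assms(3)])
  then have "\<And>k. absv (fps_exp_of (inner_series p q lam) $ k) \<le> 1"
    by (rule absv_fps_exp_of_nth_le_1[OF _ absv_nonneg q])
  then show ?thesis
    by (rule fps_to_laurent_in_E_ring[OF nonarch_valued_axioms])
qed

end
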